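(* Let $\Xi=(\xi_1,\dots,\xi_n)$ be a spanning family of vectors in $\mathbb R^k$. The infimum of $SH_\Xi(p)$ over all norms $p$ on $\mathbb R^k$ is positive and is attained at a norm of the form $q(x)=\max_i c_i|\xi_i\cdot x|$ for some $c_1,\dots,c_n\ge0$.
   Context: For a norm $p$ on $\mathbb R^k$, $p^*(v)=\max_{p(x)\le1}|x\cdot v|$ is its dual norm and $\mathrm{vol}(p)$ is the Lebesgue volume of its unit ball. Define $SH_\Xi(p)=\dfrac{\sum_{i=1}^n p^*(\xi_i)}{\mathrm{vol}(p)^{1/k}}$. *)

theory Defs
  imports "HOL-Analysis.Analysis"
begin

definition is_norm :: "(real^'k \<Rightarrow> real) \<Rightarrow> bool" where
  "is_norm p \<longleftrightarrow>
     (\<forall>x. 0 \<le> p x) \<and> (\<forall>x. p x = 0 \<longleftrightarrow> x = 0) \<and>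
     (\<forall>a x. p (a *\<^sub>R x) = \<bar>a\<bar> * p x) \<and>
     (\<forall>x y. p (x + y) \<le> p x + p y)"

definition dual_norm :: "(real^'k \<Rightarrow> real) \<Rightarrow> real^'k \<Rightarrow> real" where
  "dual_norm p v = (SUP x \<in> {x. p x \<le> 1}. \<bar>x \<bullet> v\<bar>)"

definition vol_norm :: "(real^'k \<Rightarrow> real) \<Rightarrow> real" where
  "vol_norm p = measure lebesgue {x. p x \<le> 1}"

definition SH :: "(nat \<Rightarrow> real^'k) \<Rightarrow> nat \<Rightarrow> (real^'k \<Rightarrow> real) \<Rightarrow> real" where
  "SH xi n p = (\<Sum>i<n. dual_norm p (xi i)) / vol_norm p powr (1 / real CARD('k))"

end

theory Submission
  imports Defs
begin

text \<open>
  For widths d >= 0 consider the symmetric polytope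
  P(d) = {x. |xi_i . x| <= d_i for all i < n}. The proof has three parts.
  (1) The volume of P(d) is upper semicontinuous in d, so by compactness it attains a
      maximum V > 0 at some d on the standard simplex (d_i >= 0, sum d_i = 1).
  (2) For every norm p with dual widths D_i = p*(xi_i) and S = sum D_i, the unit ball of p
      lies in P(D), and vol P(D) = S^k vol P(D/S) <= S^k V; hence SH(p) >= 1 / V^(1/k).
  (3) The maximal polytope P(d) is the unit ball of the max-form
      q(x) = max_i |xi_i . x| / d_i, whose dual norms satisfy q*(xi_i) <= d_i, so
      SH(q) <= 1 / V^(1/k) and q attains the (positive) infimum.
\<close>

text \<open>A norm is a convex function; this gives continuity for free.\<close>
lemma is_norm_convex:
  assumes "is_norm p"
  shows "convex_on UNIV p"
proof -
  have hom: "\<And>a x. p (a *\<^sub>R x) = \<bar>a\<bar> * p x" and tri: "\<And>x y. p (x + y) \<le> p x + p y"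
    using assms unfolding is_norm_def by auto
  show ?thesis unfolding convex_on_def
  proof (intro conjI convex_UNIV ballI allI impI)
    fix x y and u v :: real assume "0 \<le> u" "0 \<le> v"
    then show "p (u *\<^sub>R x + v *\<^sub>R y) \<le> u * p x + v * p y"
      using tri[of "u *\<^sub>R x" "v *\<^sub>R y"] hom[of u x] hom[of v y] by simp
  qed
qed

lemma is_norm_continuous:
  assumes "is_norm p"
  shows "continuous_on UNIV p"
  by (rule convex_on_continuous[OF open_UNIV is_norm_convex[OF assms]])

text \<open>Equivalence with the Euclidean norm (lower half), by minimising over the unit sphere.\<close>
lemma is_norm_lower_bound:
  fixes p :: "real^'k \<Rightarrow> real"
  assumes "is_norm p"
  shows "\<exists>m>0. \<forall>x. m * norm x \<le> p x"
proof -
  have hom: "\<And>a x. p (a *\<^sub>R x) = \<bar>a\<bar> * p x" and pos: "\<And>x. p x = 0 \<longleftrightarrow> x = 0"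
    and nn: "\<And>x. 0 \<le> p x"
    using assms unfolding is_norm_def by auto
  have ne: "sphere (0::real^'k) 1 \<noteq> {}"
    using vector_choose_size[of 1] by (auto simp: sphere_def)
  obtain y where y: "y \<in> sphere 0 1" "\<And>z. z \<in> sphere 0 1 \<Longrightarrow> p y \<le> p z"
    using continuous_attains_inf[OF compact_sphere ne
        continuous_on_subset[OF is_norm_continuous[OF assms] subset_UNIV]] by blast
  have "p y > 0" using y(1) pos nn by (metis less_eq_real_def norm_zero mem_sphere_0 zero_neq_one)
  moreover have "p y * norm x \<le> p x" for x
  proof (cases "x = 0")
    case True then show ?thesis using nn by simp
  next
    case False
    have "p y \<le> p ((1 / norm x) *\<^sub>R x)" using False by (intro y(2)) simp
    also have "\<dots> = p x / norm x" using hom by simp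
    finally show ?thesis using False by (simp add: field_simps)
  qed
  ultimately show ?thesis by blast
qed

lemma unit_ball_contains_ball:
  fixes p :: "real^'k \<Rightarrow> real"
  assumes "is_norm p"
  shows "\<exists>r>0. ball 0 r \<subseteq> {x. p x \<le> 1}"
proof -
  have "open {x. p x < 1}"
    by (rule open_Collect_less[OF is_norm_continuous[OF assms] continuous_on_const])
  moreover have "p 0 = 0" using assms unfolding is_norm_def by auto
  ultimately obtain r where "r > 0" "ball 0 r \<subseteq> {x. p x < 1}"
    by (metis mem_Collect_eq open_contains_ball zero_less_one)
  moreover have "{x. p x < 1} \<subseteq> {x. p x \<le> 1}" by auto
  ultimately show ?thesis by blast
qed

lemma unit_ball_compact:
  fixes p :: "real^'k \<Rightarrow> real"
  assumes "is_norm p"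
  shows "compact {x. p x \<le> 1}"
proof -
  obtain m where m: "m > 0" "\<And>x. m * norm x \<le> p x" using is_norm_lower_bound[OF assms] by blast
  have "norm x \<le> 1 / m" if "p x \<le> 1" for x
    using m(2)[of x] that m(1) by (simp add: field_simps)
  then have "bounded {x. p x \<le> 1}" unfolding bounded_iff by blast
  moreover have "closed {x. p x \<le> 1}"
    by (rule closed_Collect_le[OF is_norm_continuous[OF assms] continuous_on_const])
  ultimately show ?thesis by (simp add: compact_eq_bounded_closed)
qed

lemma vol_norm_pos:
  fixes p :: "real^'k \<Rightarrow> real"
  assumes "is_norm p"
  shows "0 < vol_norm p"
proof -
  obtain r where r: "r > 0" "ball 0 r \<subseteq> {x. p x \<le> 1}" using unit_ball_contains_ball[OF assms] by blast
  have "0 < measure lebesgue (ball (0::real^'k) r)" using content_ball_pos[OF r(1)] by simp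
  also have "\<dots> \<le> vol_norm p" unfolding vol_norm_def
    by (intro measure_mono_fmeasurable r(2)) (auto intro: lmeasurable_compact unit_ball_compact[OF assms])
  finally show ?thesis .
qed

text \<open>Points of the unit ball are bounded by the dual norm: the supremum is finite.\<close>
lemma abs_inner_le_dual_norm:
  fixes p :: "real^'k \<Rightarrow> real"
  assumes "is_norm p" "p x \<le> 1"
  shows "\<bar>x \<bullet> v\<bar> \<le> dual_norm p v"
proof -
  obtain M where M: "\<And>y. p y \<le> 1 \<Longrightarrow> norm y \<le> M"
    using compact_imp_bounded[OF unit_ball_compact[OF assms(1)]] unfolding bounded_iff by auto
  have bdd: "bdd_above ((\<lambda>y. \<bar>y \<bullet> v\<bar>) ` {y. p y \<le> 1})"
  proof (rule bdd_aboveI2)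
    fix y assume "y \<in> {y. p y \<le> 1}"
    then show "\<bar>y \<bullet> v\<bar> \<le> M * norm v"
      using Cauchy_Schwarz_ineq2[of y v] M[of y] by (simp add: mult_right_mono order_trans)
  qed
  show ?thesis unfolding dual_norm_def by (rule cSUP_upper2[OF bdd, of x]) (use assms(2) in auto)
qed

lemma spanning_orthogonal_zero:
  fixes xi :: "nat \<Rightarrow> real^'k"
  assumes "span (xi ` {..<n}) = UNIV" "\<And>i. i < n \<Longrightarrow> xi i \<bullet> x = 0"
  shows "x = 0"
proof -
  have "orthogonal x x"
    by (rule orthogonal_to_span[of x "xi ` {..<n}"])
       (use assms in \<open>auto simp: orthogonal_def inner_commute\<close>)
  then show ?thesis by (simp add: orthogonal_def)
qed

lemma spanning_has_nonzero:
  fixes xi :: "nat \<Rightarrow> real^'k"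
  assumes "span (xi ` {..<n}) = UNIV"
  shows "\<exists>i<n. xi i \<noteq> 0"
proof (rule ccontr)
  assume "\<not> (\<exists>i<n. xi i \<noteq> 0)"
  then have "\<And>x::real^'k. x = 0" using spanning_orthogonal_zero[OF assms] by auto
  moreover obtain v :: "real^'k" where "norm v = 1" using vector_choose_size[of 1] by auto
  ultimately show False by (metis norm_zero zero_neq_one)
qed

definition max_form :: "(nat \<Rightarrow> real^'k) \<Rightarrow> nat \<Rightarrow> (nat \<Rightarrow> real) \<Rightarrow> real^'k \<Rightarrow> real" where
  "max_form xi n c x = Max ((\<lambda>i. c i * \<bar>xi i \<bullet> x\<bar>) ` {..<n})"

lemma max_form_le_iff:
  assumes "0 < n"
  shows "max_form xi n c x \<le> b \<longleftrightarrow> (\<forall>i<n. c i * \<bar>xi i \<bullet> x\<bar> \<le> b)"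
  unfolding max_form_def using assms by (subst Max_le_iff) auto

lemma max_form_ge:
  assumes "i < n"
  shows "c i * \<bar>xi i \<bullet> x\<bar> \<le> max_form xi n c x"
  unfolding max_form_def using assms by (intro Max_ge) auto

lemma max_form_is_norm:
  fixes xi :: "nat \<Rightarrow> real^'k"
  assumes sp: "span (xi ` {..<n}) = UNIV" and c0: "\<forall>i<n. 0 \<le> c i"
    and cpos: "\<forall>i<n. xi i \<noteq> 0 \<longrightarrow> 0 < c i"
  shows "is_norm (max_form xi n c)"
proof -
  obtain i0 where i0: "i0 < n" using spanning_has_nonzero[OF sp] by blast
  then have n: "0 < n" by simp
  note le = max_form_le_iff[OF n] and ge = max_form_ge
  have nn: "0 \<le> max_form xi n c x" for x
    using ge[OF i0, of c xi x] c0 i0 by (meson mult_nonneg_nonneg abs_ge_zero order_trans)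
  have zero: "max_form xi n c x = 0 \<longleftrightarrow> x = 0" for x
  proof
    assume "max_form xi n c x = 0"
    then have "\<forall>i<n. c i * \<bar>xi i \<bullet> x\<bar> \<le> 0" using le[of xi c x 0] by simp
    then have "xi i \<bullet> x = 0" if "i < n" for i
      using that cpos c0 by (cases "xi i = 0") (auto simp: mult_le_0_iff, fastforce)
    then show "x = 0" using spanning_orthogonal_zero[OF sp] by blast
  qed (use le[of xi c 0 0] nn[of 0] in simp)
  have hom_le: "max_form xi n c (a *\<^sub>R x) \<le> \<bar>a\<bar> * max_form xi n c x" for a x
    unfolding le
  proof (intro allI impI)
    fix i assume "i < n"
    then show "c i * \<bar>xi i \<bullet> (a *\<^sub>R x)\<bar> \<le> \<bar>a\<bar> * max_form xi n c x"
      using mult_left_mono[OF ge[OF \<open>i < n\<close>, of c xi x], of "\<bar>a\<bar>"] by (simp add: abs_mult mult.left_commute)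
  qed
  have hom: "max_form xi n c (a *\<^sub>R x) = \<bar>a\<bar> * max_form xi n c x" for a x
  proof (cases "a = 0")
    case True then show ?thesis using zero by simp
  next
    case False
    have "max_form xi n c x \<le> \<bar>1 / a\<bar> * max_form xi n c (a *\<^sub>R x)"
      using hom_le[of "1 / a" "a *\<^sub>R x"] False by simp
    then show ?thesis using hom_le[of a x] False by (simp add: field_simps)
  qed
  have tri: "max_form xi n c (x + y) \<le> max_form xi n c x + max_form xi n c y" for x y
    unfolding le
  proof (intro allI impI)
    fix i assume i: "i < n"
    have "c i * \<bar>xi i \<bullet> (x + y)\<bar> \<le> c i * \<bar>xi i \<bullet> x\<bar> + c i * \<bar>xi i \<bullet> y\<bar>"
      using c0 i by (simp add: inner_add_right distrib_left[symmetric] mult_left_mono abs_triangle_ineq)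
    then show "c i * \<bar>xi i \<bullet> (x + y)\<bar> \<le> max_form xi n c x + max_form xi n c y"
      using ge[OF i, of c xi x] ge[OF i, of c xi y] by linarith
  qed
  show ?thesis unfolding is_norm_def using nn zero hom tri by blast
qed

definition slab_polytope :: "(nat \<Rightarrow> real^'k) \<Rightarrow> nat \<Rightarrow> (nat \<Rightarrow> real) \<Rightarrow> (real^'k) set" where
  "slab_polytope xi n d = {x. \<forall>i<n. \<bar>xi i \<bullet> x\<bar> \<le> d i}"

definition slab_vol :: "(nat \<Rightarrow> real^'k) \<Rightarrow> nat \<Rightarrow> (nat \<Rightarrow> real) \<Rightarrow> real" where
  "slab_vol xi n d = measure lebesgue (slab_polytope xi n d)"

lemma slab_polytope_mono: "(\<And>i. i < n \<Longrightarrow> d i \<le> e i) \<Longrightarrow> slab_polytope xi n d \<subseteq> slab_polytope xi n e"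
  unfolding slab_polytope_def by (auto intro: order_trans)

text \<open>For a spanning family the polytope is compact: it lies in a sublevel set of a norm.\<close>
lemma slab_polytope_compact:
  fixes xi :: "nat \<Rightarrow> real^'k"
  assumes sp: "span (xi ` {..<n}) = UNIV"
  shows "compact (slab_polytope xi n d)"
proof -
  define B where "B = Max (insert 0 (d ` {..<n}))"
  have "slab_polytope xi n d \<subseteq> {x. max_form xi n (\<lambda>_. 1) x \<le> B}"
  proof -
    have "0 < n" using spanning_has_nonzero[OF sp] by auto
    moreover have "d i \<le> B" if "i < n" for i unfolding B_def using that by (intro Max_ge) auto
    ultimately show ?thesis unfolding slab_polytope_def
      by (auto simp: max_form_le_iff intro: order_trans)
  qed
  moreover have "compact {x. max_form xi n (\<lambda>_. 1) x \<le> B}"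
  proof -
    have norm1: "is_norm (max_form xi n (\<lambda>_. 1))" by (rule max_form_is_norm[OF sp]) auto
    have "closed {x. max_form xi n (\<lambda>_. 1) x \<le> B}"
      by (rule closed_Collect_le[OF is_norm_continuous[OF norm1] continuous_on_const])
    moreover obtain m where m: "m > 0" "\<And>x. m * norm x \<le> max_form xi n (\<lambda>_. 1) x"
      using is_norm_lower_bound[OF norm1] by blast
    then have "bounded {x. max_form xi n (\<lambda>_. 1) x \<le> B}"
      unfolding bounded_iff by (metis mem_Collect_eq mult.commute order_trans pos_le_divide_eq)
    ultimately show ?thesis by (simp add: compact_eq_bounded_closed)
  qed
  moreover have "closed (slab_polytope xi n d)"
  proof -
    have "slab_polytope xi n d = (\<Inter>i\<in>{..<n}. {x. \<bar>xi i \<bullet> x\<bar> \<le> d i})" unfolding slab_polytope_def by auto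
    moreover have "closed {x. \<bar>xi i \<bullet> x\<bar> \<le> d i}" for i
      by (intro closed_Collect_le continuous_intros)
    ultimately show ?thesis by auto
  qed
  ultimately show ?thesis by (metis closed_Int_compact inf.absorb1)
qed

lemma slab_polytope_lmeasurable:
  fixes xi :: "nat \<Rightarrow> real^'k"
  assumes "span (xi ` {..<n}) = UNIV"
  shows "slab_polytope xi n d \<in> lmeasurable"
  by (rule lmeasurable_compact[OF slab_polytope_compact[OF assms]])

lemma slab_vol_mono:
  fixes xi :: "nat \<Rightarrow> real^'k"
  assumes "span (xi ` {..<n}) = UNIV" and "\<And>i. i < n \<Longrightarrow> d i \<le> e i"
  shows "slab_vol xi n d \<le> slab_vol xi n e"
  unfolding slab_vol_def
  by (rule measure_mono_fmeasurable[OF slab_polytope_mono[OF assms(2)]])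
     (auto intro: fmeasurableD slab_polytope_lmeasurable[OF assms(1)])

lemma slab_vol_scale:
  fixes xi :: "nat \<Rightarrow> real^'k"
  assumes sp: "span (xi ` {..<n}) = UNIV" and S: "S > 0"
  shows "slab_vol xi n (\<lambda>i. S * d i) = S ^ CARD('k) * slab_vol xi n d"
proof -
  have "slab_polytope xi n (\<lambda>i. S * d i) = (\<lambda>x. \<chi> k. S * x$k) ` slab_polytope xi n d"
  proof -
    have stretch: "(\<lambda>x. \<chi> k. S * x$k) = (\<lambda>x::real^'k. S *\<^sub>R x)" by (auto simp: vec_eq_iff)
    have "x \<in> (*\<^sub>R) S ` slab_polytope xi n d" if "x \<in> slab_polytope xi n (\<lambda>i. S * d i)" for x
    proof
      show "(1/S) *\<^sub>R x \<in> slab_polytope xi n d"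
        using that S by (auto simp: slab_polytope_def abs_mult field_simps)
    qed (use S in simp)
    then show ?thesis unfolding stretch using S
      by (auto simp: slab_polytope_def abs_mult intro: mult_left_mono)
  qed
  then show ?thesis unfolding slab_vol_def
    using measure_stretch[OF slab_polytope_lmeasurable[OF sp], of "\<lambda>_. S"] S by simp
qed

text \<open>Positive widths give a polytope containing a ball around the origin.\<close>
lemma slab_vol_pos:
  fixes xi :: "nat \<Rightarrow> real^'k"
  assumes sp: "span (xi ` {..<n}) = UNIV" and d: "\<And>i. i < n \<Longrightarrow> 0 < d i"
  shows "0 < slab_vol xi n d"
proof -
  define M where "M = 1 + (\<Sum>i<n. norm (xi i))"
  define \<delta> where "\<delta> = Min (insert 1 (d ` {..<n}))"
  have M: "M > 0" unfolding M_def by (simp add: add_pos_nonneg sum_nonneg)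
  have \<delta>: "\<delta> > 0" unfolding \<delta>_def using d by (subst Min_gr_iff) auto
  have "ball 0 (\<delta> / M) \<subseteq> slab_polytope xi n d"
  proof
    fix x :: "real^'k" assume "x \<in> ball 0 (\<delta> / M)"
    then have x: "M * norm x \<le> \<delta>" using M by (simp add: field_simps)
    show "x \<in> slab_polytope xi n d" unfolding slab_polytope_def
    proof (intro CollectI allI impI)
      fix i assume i: "i < n"
      have "norm (xi i) \<le> M" unfolding M_def using i
        by (smt (verit) finite_lessThan lessThan_iff member_le_sum norm_ge_zero)
      have "\<bar>xi i \<bullet> x\<bar> \<le> norm (xi i) * norm x" by (rule Cauchy_Schwarz_ineq2)
      also have "\<dots> \<le> M * norm x" using \<open>norm (xi i) \<le> M\<close> by (simp add: mult_right_mono)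
      also have "\<dots> \<le> d i" using x i unfolding \<delta>_def by (meson Min_le finite_imageI finite_insert
          finite_lessThan image_eqI insertCI lessThan_iff order_trans)
      finally show "\<bar>xi i \<bullet> x\<bar> \<le> d i" .
    qed
  qed
  then have "measure lebesgue (ball (0::real^'k) (\<delta> / M)) \<le> slab_vol xi n d"
    unfolding slab_vol_def
    by (intro measure_mono_fmeasurable) (auto intro: slab_polytope_lmeasurable[OF sp])
  moreover have "0 < measure lebesgue (ball (0::real^'k) (\<delta> / M))"
    using content_ball_pos[of "\<delta> / M" "0::real^'k"] \<delta> M by simp
  ultimately show ?thesis by linarith
qed

text \<open>A nonpositive width in a nonzero direction flattens the polytope into a hyperplane.\<close>
lemma slab_vol_zero:
  fixes xi :: "nat \<Rightarrow> real^'k"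
  assumes "i < n" "xi i \<noteq> 0" "d i \<le> 0"
  shows "slab_vol xi n d = 0"
proof -
  have "slab_polytope xi n d \<subseteq> {x. xi i \<bullet> x = 0}"
    using assms(1,3) unfolding slab_polytope_def by force
  then have "negligible (slab_polytope xi n d)"
    using negligible_hyperplane[of "xi i" 0] assms(2) negligible_subset by blast
  then show ?thesis unfolding slab_vol_def by (rule negligible_imp_measure0)
qed

definition std_simplex :: "nat \<Rightarrow> (nat \<Rightarrow> real) set" where
  "std_simplex n = {e. (\<forall>i<n. 0 \<le> e i) \<and> (\<Sum>i<n. e i) = 1}"

lemma std_simplex_le_one:
  assumes "e \<in> std_simplex n" "i < n"
  shows "0 \<le> e i \<and> e i \<le> 1"
proof -
  have "e i \<le> (\<Sum>i<n. e i)" using assms unfolding std_simplex_def by (intro member_le_sum) auto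
  then show ?thesis using assms unfolding std_simplex_def by simp
qed

lemma std_simplex_convergent_subseq:
  fixes f :: "nat \<Rightarrow> nat \<Rightarrow> real"
  assumes f: "\<And>m. f m \<in> std_simplex n"
  shows "\<exists>r l. strict_mono r \<and> l \<in> std_simplex n \<and> (\<forall>i<n. (\<lambda>m. f (r m) i) \<longlonglongrightarrow> l i)"
proof -
  have coord_bounded: "bounded (range (\<lambda>m. f m i))" if "i < n" for i
    using std_simplex_le_one[OF f] that unfolding bounded_iff by (intro exI[of _ 1]) auto
  have "\<forall>\<delta>\<subseteq>{..<n}. \<exists>l r. strict_mono r \<and>
      (\<forall>\<epsilon>>0. \<forall>\<^sub>F m in sequentially. \<forall>i\<in>\<delta>. dist (f (r m) i) (l i) < \<epsilon>)"
    by (rule compact_lemma_general[where proj = "\<lambda>x i. x i" and unproj = id])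
       (auto simp: image_image coord_bounded)
  then obtain l r where r: "strict_mono r"
    and close: "\<And>\<epsilon>. \<epsilon> > 0 \<Longrightarrow> \<forall>\<^sub>F m in sequentially. \<forall>i\<in>{..<n}. dist (f (r m) i) (l i) < \<epsilon>"
    by blast
  have lim: "(\<lambda>m. f (r m) i) \<longlonglongrightarrow> l i" if "i < n" for i
    unfolding tendsto_iff using that by (auto elim!: eventually_mono[OF close])
  have "0 \<le> l i" if "i < n" for i
    by (rule tendsto_lowerbound[OF lim[OF that]]) (use std_simplex_le_one[OF f that] in auto)
  moreover have "(\<Sum>i<n. l i) = 1"
  proof -
    have "(\<lambda>m. \<Sum>i<n. f (r m) i) \<longlonglongrightarrow> (\<Sum>i<n. l i)" by (intro tendsto_sum lim) simp
    moreover have "(\<lambda>m. \<Sum>i<n. f (r m) i) = (\<lambda>m. 1)" using f unfolding std_simplex_def by auto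
    ultimately show ?thesis using LIMSEQ_unique tendsto_const by metis
  qed
  ultimately show ?thesis using r lim unfolding std_simplex_def by blast
qed

lemma slab_polytope_Inter:
  "(\<Inter>j. slab_polytope xi n (\<lambda>i. l i + 1 / Suc j)) = slab_polytope xi n l"
proof (intro equalityI subsetI)
  fix x assume x: "x \<in> (\<Inter>j. slab_polytope xi n (\<lambda>i. l i + 1 / Suc j))"
  show "x \<in> slab_polytope xi n l" unfolding slab_polytope_def
  proof (intro CollectI allI impI)
    fix i assume "i < n"
    then have "\<bar>xi i \<bullet> x\<bar> \<le> l i + 1 / Suc j" for j using x unfolding slab_polytope_def by blast
    moreover have "(\<lambda>j. l i + 1 / Suc j) \<longlonglongrightarrow> l i"
      using LIMSEQ_inverse_real_of_nat_add[of "l i"] by (simp add: inverse_eq_divide)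
    ultimately show "\<bar>xi i \<bullet> x\<bar> \<le> l i" by (intro tendsto_lowerbound) auto
  qed
next
  fix x assume "x \<in> slab_polytope xi n l"
  then show "x \<in> (\<Inter>j. slab_polytope xi n (\<lambda>i. l i + 1 / Suc j))"
    unfolding slab_polytope_def by (auto intro: add_increasing2)
qed

text \<open>Upper semicontinuity of the volume in the widths: the limit polytope contains the
  intersection of slightly enlarged polytopes, whose volumes converge by continuity from above.\<close>
lemma slab_vol_upper_semicontinuous:
  fixes xi :: "nat \<Rightarrow> real^'k"
  assumes sp: "span (xi ` {..<n}) = UNIV"
    and lim: "\<And>i. i < n \<Longrightarrow> (\<lambda>m. f m i) \<longlonglongrightarrow> l i"
    and vol_lim: "(\<lambda>m. slab_vol xi n (f m)) \<longlonglongrightarrow> V"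
  shows "V \<le> slab_vol xi n l"
proof -
  define A where "A j = slab_polytope xi n (\<lambda>i. l i + 1 / Suc j)" for j
  have A_meas: "A j \<in> lmeasurable" for j unfolding A_def by (rule slab_polytope_lmeasurable[OF sp])
  have V_le: "V \<le> measure lebesgue (A j)" for j
  proof (rule tendsto_upperbound[OF vol_lim])
    have "\<forall>\<^sub>F m in sequentially. \<forall>i\<in>{..<n}. dist (f m i) (l i) < 1 / Suc j"
      using lim by (intro eventually_ball_finite) (auto intro: tendstoD)
    then show "\<forall>\<^sub>F m in sequentially. slab_vol xi n (f m) \<le> measure lebesgue (A j)"
    proof (rule eventually_mono)
      fix m assume "\<forall>i\<in>{..<n}. dist (f m i) (l i) < 1 / Suc j"
      then have "\<And>i. i < n \<Longrightarrow> f m i \<le> l i + 1 / Suc j" by (force simp: dist_real_def abs_less_iff)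
      then show "slab_vol xi n (f m) \<le> measure lebesgue (A j)"
        unfolding A_def slab_vol_def[symmetric] by (rule slab_vol_mono[OF sp])
    qed
  qed simp
  have "(\<lambda>j. measure lebesgue (A j)) \<longlonglongrightarrow> measure lebesgue (\<Inter>j. A j)"
  proof (rule Lim_measure_decseq)
    show "range A \<subseteq> sets lebesgue" using A_meas by (auto intro: fmeasurableD)
    show "emeasure lebesgue (A j) \<noteq> \<infinity>" for j using fmeasurableD2[OF A_meas] by simp
    show "decseq A" unfolding decseq_def A_def
      by (auto intro!: slab_polytope_mono add_left_mono divide_left_mono)
  qed
  then have "(\<lambda>j. measure lebesgue (A j)) \<longlonglongrightarrow> slab_vol xi n l"
    unfolding A_def slab_polytope_Inter slab_vol_def .
  then show ?thesis by (rule tendsto_lowerbound) (use V_le in auto)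
qed

lemma slab_vol_max:
  fixes xi :: "nat \<Rightarrow> real^'k"
  assumes sp: "span (xi ` {..<n}) = UNIV"
  shows "\<exists>d\<in>std_simplex n. \<forall>e\<in>std_simplex n. slab_vol xi n e \<le> slab_vol xi n d"
proof -
  have n: "0 < n" using spanning_has_nonzero[OF sp] by auto
  have ne: "std_simplex n \<noteq> {}"
    using n by (auto simp: std_simplex_def intro!: exI[of _ "\<lambda>_. 1 / real n"])
  have bdd: "bdd_above (slab_vol xi n ` std_simplex n)"
  proof (rule bdd_aboveI2)
    fix e assume "e \<in> std_simplex n"
    then show "slab_vol xi n e \<le> slab_vol xi n (\<lambda>_. 1)"
      by (intro slab_vol_mono[OF sp]) (simp add: std_simplex_le_one)
  qed
  define V where "V = (SUP e\<in>std_simplex n. slab_vol xi n e)"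
  have upper: "slab_vol xi n e \<le> V" if "e \<in> std_simplex n" for e
    unfolding V_def using bdd that by (rule cSUP_upper2) simp
  have "\<exists>e\<in>std_simplex n. V - 1 / Suc m < slab_vol xi n e" for m
    unfolding V_def by (subst less_cSUP_iff[OF ne bdd, symmetric]) (simp add: V_def[symmetric])
  then obtain f where f: "\<And>m. f m \<in> std_simplex n" "\<And>m. V - 1 / Suc m < slab_vol xi n (f m)"
    by metis
  have vol_lim: "(\<lambda>m. slab_vol xi n (f m)) \<longlonglongrightarrow> V"
  proof (rule tendsto_sandwich[of "\<lambda>m. V - 1 / Suc m" _ _ "\<lambda>m. V"])
    show "\<forall>\<^sub>F m in sequentially. V - 1 / Suc m \<le> slab_vol xi n (f m)"
      using f(2) by (intro always_eventually allI less_imp_le)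
    show "\<forall>\<^sub>F m in sequentially. slab_vol xi n (f m) \<le> V"
      using f(1) by (intro always_eventually allI upper)
    show "(\<lambda>m. V - 1 / Suc m) \<longlonglongrightarrow> V"
      using LIMSEQ_inverse_real_of_nat_add_minus[of V] by (simp add: inverse_eq_divide)
  qed simp
  obtain r l where r: "strict_mono r" and l: "l \<in> std_simplex n"
    and lim: "\<forall>i<n. (\<lambda>m. f (r m) i) \<longlonglongrightarrow> l i"
    using std_simplex_convergent_subseq[where f = f, OF f(1)] by blast
  have "(\<lambda>m. slab_vol xi n (f (r m))) \<longlonglongrightarrow> V"
    using LIMSEQ_subseq_LIMSEQ[OF vol_lim r] by (simp add: o_def)
  then have "V \<le> slab_vol xi n l"
    by (rule slab_vol_upper_semicontinuous[OF sp, rotated]) (use lim in blast)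
  then show ?thesis using l upper by (meson order_trans)
qed

text \<open>Dual norms are nonnegative, being suprema over a set containing 0.\<close>
lemma dual_norm_nonneg:
  fixes p :: "real^'k \<Rightarrow> real"
  assumes "is_norm p"
  shows "0 \<le> dual_norm p v"
proof -
  have "p 0 = 0" using assms unfolding is_norm_def by auto
  then show ?thesis using abs_inner_le_dual_norm[OF assms, of 0 v] by simp
qed

lemma vol_norm_le_dual_slab_vol:
  fixes xi :: "nat \<Rightarrow> real^'k"
  assumes sp: "span (xi ` {..<n}) = UNIV" and p: "is_norm p"
  shows "vol_norm p \<le> slab_vol xi n (\<lambda>i. dual_norm p (xi i))"
proof -
  have "{x. p x \<le> 1} \<subseteq> slab_polytope xi n (\<lambda>i. dual_norm p (xi i))"
    using abs_inner_le_dual_norm[OF p] by (auto simp: slab_polytope_def inner_commute)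
  then show ?thesis unfolding vol_norm_def slab_vol_def
    by (intro measure_mono_fmeasurable)
       (auto intro: fmeasurableD lmeasurable_compact unit_ball_compact[OF p] slab_polytope_lmeasurable[OF sp])
qed

lemma slab_vol_le_scaled_max:
  fixes xi :: "nat \<Rightarrow> real^'k"
  assumes sp: "span (xi ` {..<n}) = UNIV" and D0: "\<And>i. i < n \<Longrightarrow> 0 \<le> D i"
    and S: "0 < (\<Sum>i<n. D i)"
    and dmax: "\<forall>e\<in>std_simplex n. slab_vol xi n e \<le> slab_vol xi n d"
  shows "slab_vol xi n D \<le> (\<Sum>i<n. D i) ^ CARD('k) * slab_vol xi n d"
proof -
  define S where "S = (\<Sum>i<n. D i)"
  have "(\<lambda>i. D i / S) \<in> std_simplex n"
    using D0 S unfolding std_simplex_def S_def by (auto simp: sum_divide_distrib[symmetric])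
  then have "slab_vol xi n (\<lambda>i. D i / S) \<le> slab_vol xi n d" using dmax by blast
  moreover have "slab_vol xi n D = S ^ CARD('k) * slab_vol xi n (\<lambda>i. D i / S)"
    using slab_vol_scale[OF sp, of S "\<lambda>i. D i / S"] S unfolding S_def by simp
  ultimately show ?thesis unfolding S_def using S by (simp add: mult_left_mono)
qed

lemma powr_ratio_bound:
  fixes a S V :: real and k :: nat
  assumes "0 < a" "0 < S" "0 < V" "0 < k" "a \<le> S ^ k * V"
  shows "1 / V powr (1 / k) \<le> S / a powr (1 / k)"
proof -
  have "a powr (1 / k) \<le> (S ^ k * V) powr (1 / k)" by (rule powr_mono2) (use assms in auto)
  also have "\<dots> = S * V powr (1 / k)"
    using assms by (simp add: powr_mult powr_realpow[symmetric] powr_powr)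
  finally have "a powr (1 / k) \<le> S * V powr (1 / k)" .
  then show ?thesis using assms by (simp add: field_simps)
qed

lemma SH_lower_bound:
  fixes xi :: "nat \<Rightarrow> real^'k" and p :: "real^'k \<Rightarrow> real"
  assumes sp: "span (xi ` {..<n}) = UNIV" and p: "is_norm p"
    and dmax: "\<forall>e\<in>std_simplex n. slab_vol xi n e \<le> slab_vol xi n d"
    and Vpos: "0 < slab_vol xi n d"
  shows "1 / slab_vol xi n d powr (1 / CARD('k)) \<le> SH xi n p"
proof -
  define D where "D i = dual_norm p (xi i)" for i
  define S where "S = (\<Sum>i<n. D i)"
  have D0: "0 \<le> D i" for i unfolding D_def by (rule dual_norm_nonneg[OF p])
  have vol: "0 < vol_norm p" "vol_norm p \<le> slab_vol xi n D"
    unfolding D_def by (rule vol_norm_pos[OF p], rule vol_norm_le_dual_slab_vol[OF sp p])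
  have "0 < S"
  proof (rule ccontr)
    assume "\<not> 0 < S"
    then have "\<forall>i\<in>{..<n}. D i = 0"
      using D0 sum_nonneg_eq_0_iff[of "{..<n}" D] unfolding S_def by (simp add: sum_nonneg order.antisym)
    moreover obtain i where "i < n" "xi i \<noteq> 0" using spanning_has_nonzero[OF sp] by blast
    ultimately have "slab_vol xi n D = 0" by (intro slab_vol_zero) auto
    then show False using vol by linarith
  qed
  moreover have "vol_norm p \<le> S ^ CARD('k) * slab_vol xi n d"
    using vol(2) slab_vol_le_scaled_max[OF sp D0] dmax \<open>0 < S\<close> unfolding S_def by fastforce
  ultimately show ?thesis unfolding SH_def D_def[symmetric] S_def[symmetric]
    using powr_ratio_bound[OF vol(1) _ Vpos] by simp
qed

lemma max_form_unit_ball: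
  fixes xi :: "nat \<Rightarrow> real^'k"
  assumes sp: "span (xi ` {..<n}) = UNIV" and d: "d \<in> std_simplex n" and Vpos: "0 < slab_vol xi n d"
  defines "c \<equiv> \<lambda>i. if 0 < d i then 1 / d i else 0"
  shows "is_norm (max_form xi n c)" and "{x. max_form xi n c x \<le> 1} = slab_polytope xi n d"
proof -
  have n: "0 < n" using spanning_has_nonzero[OF sp] by auto
  have dpos: "0 < d i" if "i < n" "xi i \<noteq> 0" for i
    using slab_vol_zero[of i n xi d] that Vpos by force
  show "is_norm (max_form xi n c)"
    by (rule max_form_is_norm[OF sp]) (auto simp: c_def dpos)
  have "c i * \<bar>xi i \<bullet> x\<bar> \<le> 1 \<longleftrightarrow> \<bar>xi i \<bullet> x\<bar> \<le> d i" if "i < n" for i x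
  proof (cases "0 < d i")
    case True then show ?thesis unfolding c_def by (simp add: field_simps)
  next
    case False
    then have "d i = 0" "xi i = 0" using d dpos that unfolding std_simplex_def by force+
    then show ?thesis unfolding c_def by simp
  qed
  then show "{x. max_form xi n c x \<le> 1} = slab_polytope xi n d"
    unfolding slab_polytope_def max_form_le_iff[OF n] by auto
qed

lemma SH_max_form_le:
  fixes xi :: "nat \<Rightarrow> real^'k" and q :: "real^'k \<Rightarrow> real"
  assumes q: "is_norm q" and ball: "{x. q x \<le> 1} = slab_polytope xi n d" and d: "d \<in> std_simplex n"
  shows "SH xi n q \<le> 1 / slab_vol xi n d powr (1 / CARD('k))"
proof -
  have "q 0 = 0" using q unfolding is_norm_def by blast
  then have "0 \<in> {x. q x \<le> 1}" by simp
  then have ne: "{x. q x \<le> 1} \<noteq> {}" by blast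
  have dual: "dual_norm q (xi i) \<le> d i" if "i < n" for i
    unfolding dual_norm_def
  proof (rule cSUP_least[OF ne])
    fix x assume "x \<in> {x. q x \<le> 1}"
    then show "\<bar>x \<bullet> xi i\<bar> \<le> d i"
      using that unfolding ball slab_polytope_def by (simp add: inner_commute)
  qed
  have "(\<Sum>i<n. dual_norm q (xi i)) \<le> (\<Sum>i<n. d i)" by (intro sum_mono dual) simp
  also have "\<dots> = 1" using d unfolding std_simplex_def by simp
  finally have "(\<Sum>i<n. dual_norm q (xi i)) \<le> 1" .
  moreover have "vol_norm q = slab_vol xi n d" unfolding vol_norm_def ball slab_vol_def ..
  ultimately show ?thesis unfolding SH_def by (simp add: divide_right_mono)
qed

theorem mainTheorem16:
  fixes xi :: "nat \<Rightarrow> real^'k" and n :: nat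
  assumes "span (xi ` {..<n}) = UNIV"
  shows "0 < (INF p \<in> {p. is_norm p}. SH xi n p) \<and>
         (\<exists>c :: nat \<Rightarrow> real. (\<forall>i<n. 0 \<le> c i) \<and>
            is_norm (\<lambda>x. Max ((\<lambda>i. c i * \<bar>xi i \<bullet> x\<bar>) ` {..<n})) \<and>
            SH xi n (\<lambda>x. Max ((\<lambda>i. c i * \<bar>xi i \<bullet> x\<bar>) ` {..<n}))
              = (INF p \<in> {p. is_norm p}. SH xi n p))"
proof -
  note sp = assms
  obtain d where d: "d \<in> std_simplex n" and dmax: "\<forall>e\<in>std_simplex n. slab_vol xi n e \<le> slab_vol xi n d"
    using slab_vol_max[OF sp] by blast
  have n: "0 < n" using spanning_has_nonzero[OF sp] by auto
  have "0 < slab_vol xi n (\<lambda>_. 1 / real n)" using n by (intro slab_vol_pos[OF sp]) simp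
  moreover have "(\<lambda>_. 1 / real n) \<in> std_simplex n" using n unfolding std_simplex_def by simp
  ultimately have Vpos: "0 < slab_vol xi n d" using dmax by fastforce
  define c where "c = (\<lambda>i. if 0 < d i then 1 / d i else 0)"
  define q where "q = max_form xi n c"
  have q: "is_norm q" "SH xi n q \<le> 1 / slab_vol xi n d powr (1 / CARD('k))"
    using max_form_unit_ball[OF sp d Vpos] SH_max_form_le[OF _ _ d] unfolding q_def c_def by auto
  have low: "1 / slab_vol xi n d powr (1 / CARD('k)) \<le> SH xi n p" if "is_norm p" for p
    using SH_lower_bound[OF sp that dmax Vpos] .
  then have "SH xi n q \<le> SH xi n p" if "is_norm p" for p using q(2) that by fastforce
  then have "(INF p \<in> {p. is_norm p}. SH xi n p) = SH xi n q"
    using q(1) by (intro cInf_eq_minimum) auto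
  moreover have "0 < SH xi n q" using low[OF q(1)] Vpos by (smt (verit) divide_pos_pos powr_gt_zero)
  moreover have "q = (\<lambda>x. Max ((\<lambda>i. c i * \<bar>xi i \<bullet> x\<bar>) ` {..<n}))"
    unfolding q_def max_form_def ..
  moreover have "\<forall>i<n. 0 \<le> c i" unfolding c_def by simp
  ultimately show ?thesis using q(1) by (intro conjI exI[of _ c]) auto
qed

end
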